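(* Let $d_x, d_1, d_2 \ge 1$ be integers and let $\sigma:\mathbb{R}\to\mathbb{R}$ be a continuous piecewise linear function with $p \ge 2$ linear pieces. Let $\alpha_1,\alpha_2\in[0,1]$ be such that $\alpha_1 d_1$ and $\alpha_2 d_2$ are integers. Consider the architecture of selectively linearized fully connected networks $f_W:\mathbb{R}^{d_x}\to\mathbb{R}$ with two hidden layers of widths $d_1$ and $d_2$: $$z^1 = W^1 x + b^1,\quad a^1 = \phi_1(z^1),\quad z^2 = W^2 a^1 + b^2,\quad a^2=\phi_2(z^2),\quad f_W(x) = W^3 a^2 + b^3,$$ where $W^1\in\mathbb{R}^{d_1\times d_x}$, $W^2\in\mathbb{R}^{d_2\times d_1}$, $W^3\in\mathbb{R}^{1\times d_2}$, $b^1\in\mathbb{R}^{d_1}$, $b^2\in\mathbb{R}^{d_2}$, $b^3\in\mathbb{R}$ are the learnable parameters $W$, and for $l\in\{1,2\}$ the map $\phi_l$ acts coordinatewise by $$(\phi_l(z))_k = \begin{cases}\sigma(z_k) & \text{if } k\in\{1,\dots,\alpha_l d_l\},\\ z_k & \text{if } k\in\{\alpha_l d_l+1,\dots,d_l\}.\end{cases}$$ Then the memorization capacity of this architecture is at most $$\alpha_1\alpha_2 d_1 d_2\, p(p-1) + \alpha_2 d_2 (p-1) + \alpha_1(1-\alpha_2) d_1 d_2 (p-1) + 2.$$ In particular, when $\sigma$ is the ReLU ($p=2$), the memorization capacity is at most $\alpha_1(1+\alpha_2) d_1 d_2 + \alpha_2 d_2 + 2$.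
   Context: Memorization capacity: for a network architecture $f_W$ with learnable parameters $W$ and input dimension $d_x$, the memorization capacity is the largest $N$ such that for every choice of inputs $x_1,\dots,x_N\in\mathbb{R}^{d_x}$ (pairwise distinct) and every choice of labels $y_1,\dots,y_N\in[-1,1]$, there exist parameters $W$ with $f_W(x_i)=y_i$ for all $1\le i\le N$. A function $\mathbb{R}\to\mathbb{R}$ has "$p$ linear pieces" if $\mathbb{R}$ can be partitioned into $p$ intervals on each of which it is affine (and not fewer). The neurons with index $k\le \alpha_l d_l$ in layer $l$ keep the nonlinearity; the remaining ones are replaced by the identity ("linearized"). *)

theory Defs
  imports "HOL-Analysis.Analysis"
begin

definition affine_on_set :: "real set \<Rightarrow> (real \<Rightarrow> real) \<Rightarrow> bool" where
  "affine_on_set I f \<longleftrightarrow> (\<exists>a b. \<forall>x\<in>I. f x = a * x + b)"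

definition pieces_partition :: "(real \<Rightarrow> real) \<Rightarrow> nat \<Rightarrow> bool" where
  "pieces_partition f q \<longleftrightarrow> (\<exists>P. finite P \<and> card P = q \<and>
      (\<forall>I\<in>P. is_interval I \<and> I \<noteq> {} \<and> affine_on_set I f) \<and>
      pairwise disjnt P \<and> \<Union>P = UNIV)"

definition has_linear_pieces :: "(real \<Rightarrow> real) \<Rightarrow> nat \<Rightarrow> bool" where
  "has_linear_pieces f p \<longleftrightarrow> pieces_partition f p \<and> (\<forall>q<p. \<not> pieces_partition f q)"

text \<open>Selectively linearized two-hidden-layer network. Vectors are functions nat => real,
  with coordinates 0..d-1 (0-based); neurons with index < k_l keep the nonlinearity sigma.\<close>
definition slnet ::
  "nat \<Rightarrow> nat \<Rightarrow> nat \<Rightarrow> nat \<Rightarrow> nat \<Rightarrow> (real \<Rightarrow> real) \<Rightarrow>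
   (nat \<Rightarrow> nat \<Rightarrow> real) \<Rightarrow> (nat \<Rightarrow> real) \<Rightarrow>
   (nat \<Rightarrow> nat \<Rightarrow> real) \<Rightarrow> (nat \<Rightarrow> real) \<Rightarrow>
   (nat \<Rightarrow> real) \<Rightarrow> real \<Rightarrow> (nat \<Rightarrow> real) \<Rightarrow> real" where
  "slnet dx d1 d2 k1 k2 \<sigma> W1 b1 W2 b2 W3 b3 x =
    (let z1 = (\<lambda>i. (\<Sum>j<dx. W1 i j * x j) + b1 i);
         a1 = (\<lambda>i. if i < k1 then \<sigma> (z1 i) else z1 i);
         z2 = (\<lambda>i. (\<Sum>j<d1. W2 i j * a1 j) + b2 i);
         a2 = (\<lambda>i. if i < k2 then \<sigma> (z2 i) else z2 i)
     in (\<Sum>i<d2. W3 i * a2 i) + b3)"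

definition memorizes ::
  "nat \<Rightarrow> nat \<Rightarrow> nat \<Rightarrow> nat \<Rightarrow> nat \<Rightarrow> (real \<Rightarrow> real) \<Rightarrow> nat \<Rightarrow> bool" where
  "memorizes dx d1 d2 k1 k2 \<sigma> N \<longleftrightarrow>
    (\<forall>(xs :: nat \<Rightarrow> nat \<Rightarrow> real) (ys :: nat \<Rightarrow> real).
       (\<forall>i<N. \<forall>j<N. i \<noteq> j \<longrightarrow> (\<exists>t<dx. xs i t \<noteq> xs j t)) \<and> (\<forall>i<N. \<bar>ys i\<bar> \<le> 1) \<longrightarrow>
       (\<exists>W1 b1 W2 b2 W3 b3. \<forall>i<N. slnet dx d1 d2 k1 k2 \<sigma> W1 b1 W2 b2 W3 b3 (xs i) = ys i))"

end

theory Submission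
  imports Defs
begin

text \<open>Restricted to the diagonal \<open>t \<mapsto> (t, \<dots>, t)\<close> of the input space, the network is a
  piecewise affine function of one variable, and we count its breakpoints. The activation
  \<open>\<sigma>\<close> has at most \<open>p - 1\<close> of them, the left endpoints of its pieces. Composing \<open>\<sigma>\<close> with
  a function \<open>g\<close> with \<open>B\<close> breakpoints creates new breakpoints only where \<open>g\<close> passes through a
  breakpoint of \<open>\<sigma>\<close> without being locally constant, and there are at most \<open>(p - 1)(B + 1)\<close>
  such points, one per breakpoint of \<open>\<sigma>\<close> and piece of \<open>g\<close>. So the \<open>k\<^sub>1\<close> nonlinear neurons of
  the first layer produce at most \<open>k\<^sub>1(p - 1)\<close> breakpoints and the \<open>k\<^sub>2\<close> of the second at most
  \<open>k\<^sub>2(p - 1)(k\<^sub>1(p - 1) + 1)\<close> more. A function with \<open>B\<close> breakpoints cannot take the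
  alternating values \<open>(-1)\<^sup>i\<close> at \<open>N\<close> increasing points unless \<open>N \<le> B + 2\<close>, because every
  turn of the zigzag needs a breakpoint of its own. For the ReLU the single breakpoint \<open>0\<close>
  is used directly.\<close>

definition affine_between :: "real set \<Rightarrow> (real \<Rightarrow> real) \<Rightarrow> bool" where
  "affine_between S f \<longleftrightarrow> (\<forall>a b. S \<inter> {a<..<b} = {} \<longrightarrow> affine_on_set {a..b} f)"

lemma affine_on_set_degenerate:
  assumes "\<not> a < (b::real)"
  shows "affine_on_set {a..b} f"
proof -
  have "\<forall>x\<in>{a..b}. f x = 0 * x + f a"
    using assms by (metis atLeastAtMost_iff add_0 mult_zero_left order_antisym order_trans not_le)
  then show ?thesis unfolding affine_on_set_def by blast
qed

lemma affine_on_set_subset: "affine_on_set A f \<Longrightarrow> B \<subseteq> A \<Longrightarrow> affine_on_set B f"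
  unfolding affine_on_set_def by blast

lemma affine_between_mono: "affine_between S f \<Longrightarrow> S \<subseteq> S' \<Longrightarrow> affine_between S' f"
  unfolding affine_between_def by blast

lemma affine_between_affine: "affine_between S (\<lambda>t. c * t + d)"
  unfolding affine_between_def affine_on_set_def by blast

lemma affine_between_add:
  assumes "affine_between S f" "affine_between S g"
  shows "affine_between S (\<lambda>t. f t + g t)"
  unfolding affine_between_def
proof (intro allI impI)
  fix a b assume "S \<inter> {a<..<b} = {}"
  then obtain c d c' d' where "\<forall>x\<in>{a..b}. f x = c * x + d" "\<forall>x\<in>{a..b}. g x = c' * x + d'"
    using assms unfolding affine_between_def affine_on_set_def by meson
  then have "\<forall>x\<in>{a..b}. f x + g x = (c + c') * x + (d + d')"
    by (simp add: algebra_simps)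
  then show "affine_on_set {a..b} (\<lambda>t. f t + g t)"
    unfolding affine_on_set_def by blast
qed

lemma affine_between_cmult:
  assumes "affine_between S f"
  shows "affine_between S (\<lambda>t. c * f t)"
  unfolding affine_between_def
proof (intro allI impI)
  fix a b assume "S \<inter> {a<..<b} = {}"
  then obtain c' d where "\<forall>x\<in>{a..b}. f x = c' * x + d"
    using assms unfolding affine_between_def affine_on_set_def by meson
  then have "\<forall>x\<in>{a..b}. c * f x = (c * c') * x + c * d"
    by (simp add: algebra_simps)
  then show "affine_on_set {a..b} (\<lambda>t. c * f t)"
    unfolding affine_on_set_def by blast
qed

lemma affine_between_linear_combination:
  fixes n :: nat
  assumes "\<And>i. i < n \<Longrightarrow> affine_between S (f i)"
  shows "affine_between S (\<lambda>t. (\<Sum>i<n. w i * f i t) + b)"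
  using assms
proof (induction n)
  case 0
  show ?case using affine_between_affine[of S 0 b] by simp
next
  case (Suc n)
  have "affine_between S (\<lambda>t. ((\<Sum>i<n. w i * f i t) + b) + w n * f n t)"
    using Suc by (simp add: affine_between_add affine_between_cmult)
  then show ?case by (simp add: algebra_simps)
qed

lemma affine_between_relu: "affine_between {0} (\<lambda>t. max 0 t)"
  unfolding affine_between_def affine_on_set_def
proof (intro allI impI)
  fix a b :: real assume "{0} \<inter> {a<..<b} = {}"
  then have "b \<le> 0 \<or> 0 \<le> a" by auto
  then show "\<exists>c d. \<forall>x\<in>{a..b}. max 0 x = c * x + d"
  proof
    assume "b \<le> 0"
    then have "\<forall>x\<in>{a..b}. max 0 x = 0 * x + 0" by auto
    then show ?thesis by blast
  next
    assume "0 \<le> a"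
    then have "\<forall>x\<in>{a..b}. max 0 x = 1 * x + 0" by auto
    then show ?thesis by blast
  qed
qed

definition flat_at :: "(real \<Rightarrow> real) \<Rightarrow> real \<Rightarrow> bool" where
  "flat_at g x \<longleftrightarrow> (\<forall>\<^sub>F y in nhds x. g y = g x)"

lemma not_flat_at_affine:
  assumes "\<forall>x\<in>{a..b}. g x = c * x + d" "c \<noteq> 0" "a < z" "z < b"
  shows "\<not> flat_at g z"
proof
  assume "flat_at g z"
  then have "\<forall>\<^sub>F y in at_right z. g y = g z \<and> y \<in> {z<..<b}"
    using eventually_at_right_real[OF assms(4)] filter_leD[OF at_within_le_nhds]
    unfolding flat_at_def by (intro eventually_conj) auto
  then obtain y where "g y = g z" "z < y" "y < b"
    using eventually_happens' trivial_limit_at_right_real by fastforce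
  with assms show False by auto
qed

lemma affine_value_between:
  fixes a b c d x :: real
  assumes "a \<le> x" "x \<le> b"
  shows "c * x + d \<in> {min (c * a + d) (c * b + d)..max (c * a + d) (c * b + d)}"
proof (cases "c \<ge> 0")
  case True
  then show ?thesis using assms mult_left_mono[of a x c] mult_left_mono[of x b c] by auto
next
  case False
  then show ?thesis using assms mult_left_mono_neg[of a x c] mult_left_mono_neg[of x b c] by auto
qed

lemma affine_preimage_between:
  fixes a b c d r :: real
  assumes "c \<noteq> 0" "a < b"
    and "min (c * a + d) (c * b + d) < r" "r < max (c * a + d) (c * b + d)"
  shows "a < (r - d) / c \<and> (r - d) / c < b"
proof (cases "c > 0")
  case True
  then show ?thesis using assms mult_strict_left_mono[OF assms(2) True]
    by (auto simp: min_def max_def field_simps split: if_splits)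
next
  case False
  then have "c < 0" using assms(1) by simp
  then show ?thesis using assms mult_strict_left_mono_neg[OF assms(2) \<open>c < 0\<close>]
    by (auto simp: min_def max_def field_simps split: if_splits)
qed

text \<open>Outside the breakpoints \<open>S\<close> of \<open>g\<close>, the composition \<open>\<sigma> \<circ> g\<close> can only break where \<open>g\<close>
  hits a breakpoint of \<open>\<sigma>\<close> without being locally constant.\<close>
definition crossings :: "real set \<Rightarrow> real set \<Rightarrow> (real \<Rightarrow> real) \<Rightarrow> real set" where
  "crossings S R g = {x. x \<notin> S \<and> g x \<in> R \<and> \<not> flat_at g x}"

lemma affine_between_comp:
  assumes g: "affine_between S g" and \<sigma>: "affine_between R \<sigma>"
  shows "affine_between (S \<union> crossings S R g) (\<lambda>t. \<sigma> (g t))"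
  unfolding affine_between_def
proof (intro allI impI)
  fix a b assume ab: "(S \<union> crossings S R g) \<inter> {a<..<b} = {}"
  show "affine_on_set {a..b} (\<lambda>t. \<sigma> (g t))"
  proof (cases "a < b")
    case False
    then show ?thesis by (rule affine_on_set_degenerate)
  next
    case True
    obtain c d where cd: "\<forall>x\<in>{a..b}. g x = c * x + d"
      using g ab unfolding affine_between_def affine_on_set_def by blast
    define lo where "lo = min (c * a + d) (c * b + d)"
    define hi where "hi = max (c * a + d) (c * b + d)"
    have "R \<inter> {lo<..<hi} = {}"
    proof (rule ccontr)
      assume "R \<inter> {lo<..<hi} \<noteq> {}"
      then obtain r where r: "r \<in> R" "lo < r" "r < hi" by auto
      then have "c \<noteq> 0" unfolding lo_def hi_def by auto
      define z where "z = (r - d) / c"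
      have z: "a < z" "z < b"
        using affine_preimage_between[OF \<open>c \<noteq> 0\<close> True] r unfolding z_def lo_def hi_def by auto
      have "g z = r" using cd z \<open>c \<noteq> 0\<close> unfolding z_def by simp
      moreover have "\<not> flat_at g z" using not_flat_at_affine[OF cd \<open>c \<noteq> 0\<close> z] .
      moreover have "z \<notin> S" using ab z by auto
      ultimately have "z \<in> crossings S R g" using r unfolding crossings_def by simp
      with ab z show False by auto
    qed
    then obtain \<gamma> \<delta> where \<gamma>\<delta>: "\<forall>w\<in>{lo..hi}. \<sigma> w = \<gamma> * w + \<delta>"
      using \<sigma> unfolding affine_between_def affine_on_set_def by blast
    have "\<sigma> (g x) = (\<gamma> * c) * x + (\<gamma> * d + \<delta>)" if "x \<in> {a..b}" for x
    proof -
      have "g x \<in> {lo..hi}"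
        using cd that affine_value_between[of a x b c d] unfolding lo_def hi_def by simp
      then show ?thesis using cd \<gamma>\<delta> that by (simp add: algebra_simps)
    qed
    then show ?thesis unfolding affine_on_set_def by blast
  qed
qed

lemma no_point_between_if_card_less_eq:
  fixes S :: "real set"
  assumes "finite S" "x \<le> y" "card {s\<in>S. s < x} = card {s\<in>S. s < y}"
  shows "S \<inter> {x..<y} = {}"
proof -
  have "{s\<in>S. s < x} \<subseteq> {s\<in>S. s < y}" using assms(2) by auto
  then have "{s\<in>S. s < x} = {s\<in>S. s < y}"
    using card_subset_eq[of "{s\<in>S. s < y}"] assms(1,3) by simp
  then show ?thesis by (metis (mono_tags, lifting) Int_emptyI atLeastLessThan_iff mem_Collect_eq not_le)
qed

lemma flat_at_if_equal_values:
  assumes fin: "finite S" and g: "affine_between S g" and "x \<notin> S" "x < y" "g x = g y"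
    and no_break: "S \<inter> {x..<y} = {}"
  shows "flat_at g x"
proof -
  obtain e where e: "e > 0" "\<forall>s\<in>S. s \<noteq> x \<longrightarrow> e \<le> dist x s"
    using finite_set_avoid[OF fin] by blast
  have "S \<inter> {x - e<..<y} = {}"
  proof (rule ccontr)
    assume "S \<inter> {x - e<..<y} \<noteq> {}"
    then obtain s where "s \<in> S" "x - e < s" "s < y" by auto
    show False
    proof (cases "s < x")
      case True
      then have "dist x s < e" using \<open>x - e < s\<close> by (simp add: dist_real_def)
      with e \<open>s \<in> S\<close> \<open>x \<notin> S\<close> show False by force
    next
      case False
      with no_break \<open>s \<in> S\<close> \<open>s < y\<close> show False by auto
    qed
  qed
  then obtain c d where cd: "\<forall>z\<in>{x - e..y}. g z = c * z + d"
    using g unfolding affine_between_def affine_on_set_def by blast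
  then have "c * x + d = c * y + d" using \<open>g x = g y\<close> \<open>x < y\<close> e(1) by auto
  then have "c = 0" using \<open>x < y\<close> by simp
  have "g z = g x" if "dist z x < min e (y - x)" for z
  proof -
    have "z \<in> {x - e..y}" "x \<in> {x - e..y}"
      using that \<open>x < y\<close> e(1) by (auto simp: dist_real_def)
    then show ?thesis using cd \<open>c = 0\<close> by simp
  qed
  moreover have "min e (y - x) > 0" using e(1) \<open>x < y\<close> by simp
  ultimately show ?thesis unfolding flat_at_def eventually_nhds_metric by blast
qed

text \<open>A crossing is determined by its value and by the number of breakpoints of \<open>g\<close> to its left.\<close>
lemma card_crossings_le:
  assumes fin: "finite S" and g: "affine_between S g" and "finite R"
  shows "finite (crossings S R g) \<and> card (crossings S R g) \<le> card R * (card S + 1)"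
proof -
  define h where "h x = (g x, card {s\<in>S. s < x})" for x
  have image: "h ` crossings S R g \<subseteq> R \<times> {..card S}"
    using fin by (auto simp: h_def crossings_def intro: card_mono)
  have inj: "inj_on h (crossings S R g)"
  proof (rule inj_onI)
    have flat: "flat_at g x" if "x \<in> crossings S R g" "x < y" "h x = h y" for x y
    proof (rule flat_at_if_equal_values[OF fin g])
      show "x \<notin> S" using that(1) unfolding crossings_def by simp
      show "g x = g y" "S \<inter> {x..<y} = {}"
        using that(3) no_point_between_if_card_less_eq[OF fin less_imp_le[OF that(2)]]
        unfolding h_def by simp_all
    qed (fact that(2))
    fix x y assume xy: "x \<in> crossings S R g" "y \<in> crossings S R g" "h x = h y"
    then have "\<not> flat_at g x" "\<not> flat_at g y" unfolding crossings_def by auto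
    then show "x = y"
      using flat[OF xy(1) _ xy(3)] flat[OF xy(2) _ xy(3)[symmetric]] by (meson linorder_neqE)
  qed
  have fin: "finite (R \<times> {..card S})" using \<open>finite R\<close> by simp
  have "card (crossings S R g) \<le> card (R \<times> {..card S})"
    using card_inj_on_le[OF inj image fin] .
  then show ?thesis
    using inj_on_finite[OF inj image fin] by (simp add: card_cartesian_product)
qed

definition zigzag :: "(real \<Rightarrow> real) \<Rightarrow> (nat \<Rightarrow> real) \<Rightarrow> nat \<Rightarrow> bool" where
  "zigzag f u n \<longleftrightarrow> (\<forall>i<n. u i < u (Suc i)) \<and>
     (\<forall>i. Suc i < n \<longrightarrow> (f (u (Suc i)) - f (u i)) * (f (u (Suc (Suc i))) - f (u (Suc i))) < 0)"

lemma affine_increments_nonneg: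
  assumes "affine_on_set {x..z} f" "x \<le> y" "y \<le> z"
  shows "0 \<le> (f y - f x) * (f z - f y)"
proof -
  obtain a b where ab: "\<forall>t\<in>{x..z}. f t = a * t + b"
    using assms(1) unfolding affine_on_set_def by blast
  then have "(f y - f x) * (f z - f y) = a\<^sup>2 * ((y - x) * (z - y))"
    using assms(2,3) by (simp add: algebra_simps power2_eq_square)
  also have "\<dots> \<ge> 0" using assms(2,3) by simp
  finally show ?thesis .
qed

text \<open>The first turn needs a breakpoint \<open>c\<close> in \<open>(u 0, u 2)\<close>; restarting the zigzag at some
  \<open>v \<ge> c\<close> leaves all later turns to breakpoints beyond \<open>v\<close>.\<close>
lemma zigzag_first_breakpoint:
  assumes fin: "finite S" and f: "affine_between S f" and zz: "zigzag f u (Suc (Suc n))"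
  shows "\<exists>c\<in>S. \<exists>v. u 0 < c \<and> c \<le> v \<and> zigzag f (\<lambda>i. if i = 0 then v else u (Suc i)) (Suc n)"
proof -
  have u: "u 0 < u 1" "u 1 < u 2" and turn: "(f (u 1) - f (u 0)) * (f (u 2) - f (u 1)) < 0"
    using zz unfolding zigzag_def by (auto simp: numeral_2_eq_2)
  show ?thesis
  proof (cases "\<exists>c\<in>S. u 0 < c \<and> c \<le> u 1")
    case True
    moreover have "zigzag f (\<lambda>i. if i = 0 then u 1 else u (Suc i)) (Suc n)"
      using zz unfolding zigzag_def by (auto simp: nat.split_sels(1) split: if_splits)
    ultimately show ?thesis by blast
  next
    case no_early: False
    define Q where "Q = S \<inter> {u 1<..<u 2}"
    have "Q \<noteq> {}"
    proof
      assume "Q = {}"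
      have "S \<inter> {u 0<..<u 2} = {}"
      proof (intro equals0I)
        fix t assume t: "t \<in> S \<inter> {u 0<..<u 2}"
        show False
        proof (cases "t \<le> u 1")
          case True
          with t no_early show False by auto
        next
          case False
          with t have "t \<in> Q" unfolding Q_def by auto
          with \<open>Q = {}\<close> show False by blast
        qed
      qed
      then have "affine_on_set {u 0..u 2} f" using f unfolding affine_between_def by blast
      with turn u show False using affine_increments_nonneg[of "u 0" "u 2" f "u 1"] by simp
    qed
    define c where "c = Min Q"
    have "finite Q" using fin unfolding Q_def by simp
    then have c: "c \<in> S" "u 1 < c" "c < u 2" and c_least: "\<And>t. t \<in> Q \<Longrightarrow> c \<le> t"
      using Min_in[OF _ \<open>Q \<noteq> {}\<close>] Min_le unfolding c_def Q_def by auto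
    have "S \<inter> {u 0<..<c} = {}"
      using no_early c_least c unfolding Q_def by (force simp: not_le[symmetric])
    then have "affine_on_set {u 0..c} f" using f unfolding affine_between_def by blast
    then have "0 \<le> (f (u 1) - f (u 0)) * (f c - f (u 1))"
      using affine_increments_nonneg u c by (simp add: less_imp_le)
    then have new_turn: "(f (u 1) - f (u 0)) * (f (u 2) - f c) < 0"
      using turn by (simp add: algebra_simps)
    define w where "w i = (if i = 0 then c else u (Suc i))" for i
    have "zigzag f w (Suc n)"
      unfolding zigzag_def
    proof (intro conjI allI impI)
      fix i assume "i < Suc n"
      then show "w i < w (Suc i)"
        using zz c unfolding zigzag_def w_def by (auto simp: numeral_2_eq_2)
    next
      fix i assume i: "Suc i < Suc n"
      show "(f (w (Suc i)) - f (w i)) * (f (w (Suc (Suc i))) - f (w (Suc i))) < 0"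
      proof (cases "i = 0")
        case True
        have "(f (u 2) - f (u 1)) * (f (u 3) - f (u 2)) < 0"
          using zz i True unfolding zigzag_def by (auto simp: numeral_2_eq_2 numeral_3_eq_3)
        with turn new_turn have "(f (u 2) - f c) * (f (u 3) - f (u 2)) < 0"
          by (auto simp: mult_less_0_iff)
        then show ?thesis using True unfolding w_def by (simp add: numeral_2_eq_2 numeral_3_eq_3)
      next
        case False
        then show ?thesis using zz i unfolding zigzag_def w_def by auto
      qed
    qed
    then show ?thesis using c u unfolding w_def by (intro bexI[of _ c]) auto
  qed
qed

lemma zigzag_breakpoints:
  assumes "finite S" "affine_between S f" "zigzag f u n"
  shows "n - 1 \<le> card (S \<inter> {u 0<..})"
  using assms(3)
proof (induction n arbitrary: u)
  case 0
  then show ?case by simp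
next
  case (Suc m)
  show ?case
  proof (cases m)
    case 0
    then show ?thesis by simp
  next
    case (Suc n)
    obtain c v where c: "c \<in> S" "u 0 < c" "c \<le> v"
      and zz: "zigzag f (\<lambda>i. if i = 0 then v else u (Suc i)) m"
      using zigzag_first_breakpoint[OF assms(1,2)] \<open>zigzag f u (Suc m)\<close> Suc by blast
    have "m - 1 \<le> card (S \<inter> {v<..})" using "Suc.IH"[OF zz] by simp
    also have "\<dots> < card (insert c (S \<inter> {v<..}))"
      using assms(1) c by (simp add: card_insert_disjoint)
    also have "\<dots> \<le> card (S \<inter> {u 0<..})"
      using assms(1) c by (intro card_mono) auto
    finally show ?thesis by simp
  qed
qed

lemma finite_cover_has_unbounded_below_member:
  fixes P :: "real set set"
  assumes "finite P" "\<Union>P = UNIV"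
  shows "\<exists>I\<in>P. \<not> bdd_below I"
proof (rule ccontr)
  assume "\<not> (\<exists>I\<in>P. \<not> bdd_below I)"
  then have "bdd_below (\<Union>I\<in>P. I)" by (subst bdd_below_UN[OF assms(1)]) auto
  then obtain m :: real where "\<forall>x. m \<le> x" using assms(2) by (auto simp: bdd_below_def)
  then have "m \<le> m - 1" by blast
  then show False by simp
qed

lemma Inf_interval_between:
  fixes J :: "real set"
  assumes "is_interval J" "m \<notin> J" "x \<in> J" "m < x"
  shows "bdd_below J \<and> m \<le> Inf J \<and> Inf J \<le> x"
proof -
  have lower: "m \<le> y" if "y \<in> J" for y
  proof (rule ccontr)
    assume "\<not> m \<le> y"
    then have "m \<in> J" using assms(1,3,4) that unfolding is_interval_1 by (meson less_imp_le not_le)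
    with assms(2) show False by contradiction
  qed
  then have "bdd_below J" by (rule bdd_belowI)
  moreover have "m \<le> Inf J" using lower assms(3) by (intro cInf_greatest) auto
  moreover have "Inf J \<le> x" using cInf_lower[OF assms(3) \<open>bdd_below J\<close>] .
  ultimately show ?thesis by simp
qed

lemma affine_on_set_closure:
  assumes "continuous_on UNIV \<sigma>" "a < b" "affine_on_set {a<..<b} \<sigma>"
  shows "affine_on_set {a..b} \<sigma>"
proof -
  obtain \<alpha> \<beta> where "\<forall>x\<in>{a<..<b}. \<sigma> x = \<alpha> * x + \<beta>"
    using assms(3) unfolding affine_on_set_def by blast
  moreover have "closed {x. \<sigma> x = \<alpha> * x + \<beta>}"
    using assms(1) by (intro closed_Collect_eq continuous_intros) auto
  ultimately have "closure {a<..<b} \<subseteq> {x. \<sigma> x = \<alpha> * x + \<beta>}"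
    by (intro closure_minimal) auto
  then show ?thesis using assms(2) unfolding affine_on_set_def by auto
qed

lemma interval_within_piece:
  fixes P :: "real set set"
  assumes intervals: "\<forall>I\<in>P. is_interval I" and disj: "pairwise disjnt P" and cover: "\<Union>P = UNIV"
    and gap: "Inf ` {I\<in>P. bdd_below I} \<inter> {a<..<b} = {}"
    and I: "I \<in> P" "m \<in> I" and m: "a < m" "m < b"
  shows "{a<..<b} \<subseteq> I"
proof
  fix x assume x: "x \<in> {a<..<b}"
  show "x \<in> I"
  proof (rule ccontr)
    assume "x \<notin> I"
    obtain J where J: "J \<in> P" "x \<in> J" using cover by blast
    have "I \<noteq> J" using \<open>x \<notin> I\<close> J(2) by blast
    then have "I \<inter> J = {}" using disj I(1) J(1) unfolding pairwise_def disjnt_def by blast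
    have "x \<noteq> m" using \<open>x \<notin> I\<close> I(2) by blast
    then obtain K l r where K: "K \<in> P" "is_interval K" "l \<notin> K" "r \<in> K" "l < r" "l \<in> {a<..<b}" "r \<in> {a<..<b}"
    proof (cases "m < x")
      case True
      have "m \<notin> J" using I(2) \<open>I \<inter> J = {}\<close> by blast
      with True J x m intervals that[of J m x] show ?thesis by auto
    next
      case False
      with \<open>x \<noteq> m\<close> have "x < m" by simp
      with I x m \<open>x \<notin> I\<close> intervals that[of I x m] show ?thesis by auto
    qed
    then have "bdd_below K \<and> l \<le> Inf K \<and> Inf K \<le> r"
      by (intro Inf_interval_between)
    then have "Inf K \<in> Inf ` {I\<in>P. bdd_below I} \<inter> {a<..<b}" using K by auto
    with gap show False by blast
  qed
qed

text \<open>The breakpoints are the left endpoints of the pieces; the leftmost piece is unbounded below.\<close>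
lemma affine_between_of_pieces_partition:
  assumes cont: "continuous_on UNIV \<sigma>" and "pieces_partition \<sigma> p"
  shows "\<exists>R. finite R \<and> card R \<le> p - 1 \<and> affine_between R \<sigma>"
proof -
  obtain P where "finite P" "card P = p" and pieces: "\<forall>I\<in>P. is_interval I \<and> affine_on_set I \<sigma>"
    and disj: "pairwise disjnt P" and cover: "\<Union>P = UNIV"
    using assms(2) unfolding pieces_partition_def by blast
  define R where "R = Inf ` {I\<in>P. bdd_below I}"
  have "{I\<in>P. bdd_below I} \<subset> P"
    using finite_cover_has_unbounded_below_member[OF \<open>finite P\<close> cover] by auto
  then have "card {I\<in>P. bdd_below I} < p"
    using psubset_card_mono[OF \<open>finite P\<close>] \<open>card P = p\<close> by simp
  moreover have "card R \<le> card {I\<in>P. bdd_below I}" unfolding R_def by (rule card_image_le) (use \<open>finite P\<close> in simp)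
  ultimately have "card R \<le> p - 1" by simp
  moreover have "affine_between R \<sigma>"
    unfolding affine_between_def
  proof (intro allI impI)
    fix a b assume R_gap: "R \<inter> {a<..<b} = {}"
    show "affine_on_set {a..b} \<sigma>"
    proof (cases "a < b")
      case False
      then show ?thesis by (rule affine_on_set_degenerate)
    next
      case True
      define m where "m = (a + b) / 2"
      have m: "a < m" "m < b" unfolding m_def using True by auto
      obtain I where I: "I \<in> P" "m \<in> I" using cover by blast
      have "\<forall>I\<in>P. is_interval I" using pieces by blast
      then have "{a<..<b} \<subseteq> I"
        using interval_within_piece[OF _ disj cover _ I m] R_gap unfolding R_def by simp
      moreover have "affine_on_set I \<sigma>" using pieces I(1) by blast
      ultimately have "affine_on_set {a<..<b} \<sigma>" by (rule affine_on_set_subset[rotated])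
      then show ?thesis by (rule affine_on_set_closure[OF cont True])
    qed
  qed
  moreover have "finite R" unfolding R_def using \<open>finite P\<close> by simp
  ultimately show ?thesis by blast
qed

lemma selective_layer_affine_between:
  assumes S: "finite S" and z: "\<And>i. i < d \<Longrightarrow> affine_between S (z i)"
    and R: "finite R" and \<sigma>: "affine_between R \<sigma>"
  shows "\<exists>U. finite U \<and> card U \<le> k * (card R * (card S + 1)) \<and>
           (\<forall>i<d. affine_between (S \<union> U) (\<lambda>t. if i < k then \<sigma> (z i t) else z i t))"
proof -
  define U where "U = (\<Union>i<min k d. crossings S R (z i))"
  have crossings: "finite (crossings S R (z i)) \<and> card (crossings S R (z i)) \<le> card R * (card S + 1)"
    if "i < d" for i
    using card_crossings_le[OF S z[OF that] R] .
  have "finite U" unfolding U_def using crossings by simp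
  have "card U \<le> (\<Sum>i<min k d. card (crossings S R (z i)))"
    unfolding U_def by (rule card_UN_le) simp
  also have "\<dots> \<le> (\<Sum>i<min k d. card R * (card S + 1))"
    using crossings by (intro sum_mono) simp
  also have "\<dots> \<le> k * (card R * (card S + 1))" by simp
  finally have "card U \<le> k * (card R * (card S + 1))" .
  moreover have "affine_between (S \<union> U) (\<lambda>t. if i < k then \<sigma> (z i t) else z i t)" if "i < d" for i
  proof (cases "i < k")
    case True
    have "crossings S R (z i) \<subseteq> U" unfolding U_def using True that by auto
    then have "affine_between (S \<union> U) (\<lambda>t. \<sigma> (z i t))"
      using affine_between_mono[OF affine_between_comp[OF z[OF that] \<sigma>]] by blast
    then show ?thesis using True by simp
  next
    case False
    then show ?thesis using affine_between_mono[OF z[OF that]] by simp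
  qed
  ultimately show ?thesis using \<open>finite U\<close> by blast
qed

lemma slnet_on_diagonal_affine_between:
  assumes R: "finite R" and \<sigma>: "affine_between R \<sigma>"
  shows "\<exists>S. finite S \<and> card S \<le> k1 * card R + k2 * card R * (k1 * card R + 1) \<and>
           affine_between S (\<lambda>t. slnet dx d1 d2 k1 k2 \<sigma> W1 b1 W2 b2 W3 b3 (\<lambda>_. t))"
proof -
  define z1 where "z1 i t = (\<Sum>j<dx. W1 i j * t) + b1 i" for i t
  define a1 where "a1 j t = (if j < k1 then \<sigma> (z1 j t) else z1 j t)" for j t
  define z2 where "z2 i t = (\<Sum>j<d1. W2 i j * a1 j t) + b2 i" for i t
  define a2 where "a2 i t = (if i < k2 then \<sigma> (z2 i t) else z2 i t)" for i t
  have "z1 i = (\<lambda>t. (\<Sum>j<dx. W1 i j) * t + b1 i)" for i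
    unfolding z1_def by (simp add: sum_distrib_right)
  then have "affine_between {} (z1 i)" for i using affine_between_affine by simp
  then obtain U1 where U1: "finite U1" "card U1 \<le> k1 * card R"
    and a1: "\<forall>j<d1. affine_between U1 (a1 j)"
    using selective_layer_affine_between[OF finite.emptyI _ R \<sigma>, of d1 z1 k1]
    unfolding a1_def by auto
  have "affine_between U1 (z2 i)" for i
    using a1 unfolding z2_def by (intro affine_between_linear_combination) simp
  then obtain U2 where U2: "finite U2" "card U2 \<le> k2 * (card R * (card U1 + 1))"
    and a2: "\<forall>i<d2. affine_between (U1 \<union> U2) (a2 i)"
    using selective_layer_affine_between[OF U1(1) _ R \<sigma>, of d2 z2 k2]
    unfolding a2_def by auto
  have "affine_between (U1 \<union> U2) (\<lambda>t. (\<Sum>i<d2. W3 i * a2 i t) + b3)"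
    using a2 by (intro affine_between_linear_combination) simp
  moreover have "(\<lambda>t. slnet dx d1 d2 k1 k2 \<sigma> W1 b1 W2 b2 W3 b3 (\<lambda>_. t)) = (\<lambda>t. (\<Sum>i<d2. W3 i * a2 i t) + b3)"
    unfolding slnet_def Let_def a2_def z2_def a1_def z1_def ..
  moreover have "card (U1 \<union> U2) \<le> k1 * card R + k2 * card R * (k1 * card R + 1)"
  proof -
    have "card (U1 \<union> U2) \<le> card U1 + card U2" by (rule card_Un_le)
    also have "\<dots> \<le> k1 * card R + k2 * (card R * (k1 * card R + 1))"
      using U1(2) U2(2) by (intro add_mono order.trans[OF U2(2)]) (auto intro!: mult_le_mono)
    finally show ?thesis by (simp add: algebra_simps)
  qed
  ultimately show ?thesis using U1(1) U2(1) by (intro exI[of _ "U1 \<union> U2"]) simp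
qed

lemma memorizes_le_breakpoints:
  assumes R: "finite R" and \<sigma>: "affine_between R \<sigma>" and "dx \<ge> 1"
    and "memorizes dx d1 d2 k1 k2 \<sigma> N"
  shows "N \<le> k1 * card R + k2 * card R * (k1 * card R + 1) + 2"
proof -
  define xs where "xs i = (\<lambda>_::nat. real i)" for i :: nat
  define ys where "ys i = (-1::real) ^ i" for i :: nat
  have "\<forall>i<N. \<forall>j<N. i \<noteq> j \<longrightarrow> (\<exists>t<dx. xs i t \<noteq> xs j t)"
    using \<open>dx \<ge> 1\<close> unfolding xs_def by (intro allI impI exI[of _ 0]) auto
  moreover have "\<forall>i<N. \<bar>ys i\<bar> \<le> 1" unfolding ys_def by (simp add: power_abs)
  ultimately have "\<exists>W1 b1 W2 b2 W3 b3. \<forall>i<N. slnet dx d1 d2 k1 k2 \<sigma> W1 b1 W2 b2 W3 b3 (xs i) = ys i"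
    using assms(4)[unfolded memorizes_def, rule_format, of xs ys] by simp
  then obtain W1 b1 W2 b2 W3 b3
    where fit: "\<forall>i<N. slnet dx d1 d2 k1 k2 \<sigma> W1 b1 W2 b2 W3 b3 (xs i) = ys i"
    by blast
  define F where "F = (\<lambda>t. slnet dx d1 d2 k1 k2 \<sigma> W1 b1 W2 b2 W3 b3 (\<lambda>_. t))"
  obtain S where S: "finite S" "card S \<le> k1 * card R + k2 * card R * (k1 * card R + 1)"
    "affine_between S F"
    using slnet_on_diagonal_affine_between[OF R \<sigma>] unfolding F_def by meson
  have F: "F (real i) = (-1) ^ i" if "i < N" for i
    using fit that unfolding F_def xs_def ys_def by simp
  have "zigzag F real (N - 1)"
    unfolding zigzag_def
  proof (intro conjI allI impI)
    fix i assume "Suc i < N - 1"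
    then show "(F (real (Suc i)) - F (real i)) * (F (real (Suc (Suc i))) - F (real (Suc i))) < 0"
      using F[of i] F[of "Suc i"] F[of "Suc (Suc i)"] by (cases "even i") auto
  qed simp
  then have "N - 1 - 1 \<le> card (S \<inter> {real 0<..})"
    using zigzag_breakpoints[OF S(1,3)] by blast
  also have "\<dots> \<le> card S" using S(1) by (intro card_mono) auto
  finally show ?thesis using S(2) by linarith
qed

lemma memorizes_capacity_bound:
  assumes "finite R" "affine_between R \<sigma>" "card R < q" "dx \<ge> 1" "d2 \<ge> 1"
    and "memorizes dx d1 d2 k1 k2 \<sigma> N"
  shows "real N \<le> real k1 * real k2 * real q * (real q - 1) + real k2 * (real q - 1)
                  + real k1 * (real d2 - real k2) * (real q - 1) + 2"
proof -
  define c where "c = real (card R)"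
  have "real N \<le> real (k1 * card R + k2 * card R * (k1 * card R + 1) + 2)"
    using memorizes_le_breakpoints[OF assms(1,2,4,6)] by (rule of_nat_mono)
  also have "\<dots> = real k1 * c + real k2 * c * (real k1 * c + 1) + 2"
    unfolding c_def by (simp add: algebra_simps)
  also have "\<dots> \<le> real k1 * (real q - 1) + real k2 * (real q - 1) * (real k1 * (real q - 1) + 1) + 2"
    using assms(3) unfolding c_def by (intro add_mono mult_mono order.refl) auto
  also have "\<dots> \<le> real k1 * real k2 * real q * (real q - 1) + real k2 * (real q - 1)
                  + real k1 * (real d2 - real k2) * (real q - 1) + 2"
  proof -
    have "0 \<le> real k1 * (real q - 1) * (real d2 - 1)" using assms(3,5) by simp
    then show ?thesis by (simp add: algebra_simps)
  qed
  finally show ?thesis .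
qed

lemma of_nat_nat_floor_Ints: "x \<in> \<int> \<Longrightarrow> 0 \<le> x \<Longrightarrow> real (nat \<lfloor>x\<rfloor>) = x"
  by (elim Ints_cases) simp

theorem corollary1:
  fixes dx d1 d2 p :: nat and \<sigma> :: "real \<Rightarrow> real" and \<alpha>1 \<alpha>2 :: real
  assumes "dx \<ge> 1" "d1 \<ge> 1" "d2 \<ge> 1"
    and "continuous_on UNIV \<sigma>" "has_linear_pieces \<sigma> p" "p \<ge> 2"
    and "0 \<le> \<alpha>1" "\<alpha>1 \<le> 1" "0 \<le> \<alpha>2" "\<alpha>2 \<le> 1"
    and "\<alpha>1 * real d1 \<in> \<int>" "\<alpha>2 * real d2 \<in> \<int>"
  shows "(\<forall>N. memorizes dx d1 d2 (nat \<lfloor>\<alpha>1 * real d1\<rfloor>) (nat \<lfloor>\<alpha>2 * real d2\<rfloor>) \<sigma> N \<longrightarrow>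
            real N \<le> \<alpha>1 * \<alpha>2 * real d1 * real d2 * real p * (real p - 1)
                    + \<alpha>2 * real d2 * (real p - 1)
                    + \<alpha>1 * (1 - \<alpha>2) * real d1 * real d2 * (real p - 1) + 2)
       \<and> (\<forall>N. memorizes dx d1 d2 (nat \<lfloor>\<alpha>1 * real d1\<rfloor>) (nat \<lfloor>\<alpha>2 * real d2\<rfloor>) (\<lambda>t. max 0 t) N \<longrightarrow>
            real N \<le> \<alpha>1 * (1 + \<alpha>2) * real d1 * real d2 + \<alpha>2 * real d2 + 2)"
proof -
  define k1 where "k1 = nat \<lfloor>\<alpha>1 * real d1\<rfloor>"
  define k2 where "k2 = nat \<lfloor>\<alpha>2 * real d2\<rfloor>"
  have k: "real k1 = \<alpha>1 * real d1" "real k2 = \<alpha>2 * real d2"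
    unfolding k1_def k2_def using assms(7,9,11,12) by (simp_all add: of_nat_nat_floor_Ints)
  obtain R where R: "finite R" "card R \<le> p - 1" "affine_between R \<sigma>"
    using affine_between_of_pieces_partition assms(4,5) unfolding has_linear_pieces_def by blast
  have "real N \<le> \<alpha>1 * \<alpha>2 * real d1 * real d2 * real p * (real p - 1) + \<alpha>2 * real d2 * (real p - 1)
                + \<alpha>1 * (1 - \<alpha>2) * real d1 * real d2 * (real p - 1) + 2"
    if "memorizes dx d1 d2 k1 k2 \<sigma> N" for N
    using memorizes_capacity_bound[OF R(1,3) _ assms(1,3) that, of p] R(2) assms(6) k
    by (simp add: algebra_simps)
  moreover have "real N \<le> \<alpha>1 * (1 + \<alpha>2) * real d1 * real d2 + \<alpha>2 * real d2 + 2"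
    if "memorizes dx d1 d2 k1 k2 (\<lambda>t. max 0 t) N" for N
    using memorizes_capacity_bound[OF _ affine_between_relu _ assms(1,3) that, of 2] k
    by (simp add: algebra_simps)
  ultimately show ?thesis unfolding k1_def k2_def by blast
qed

end
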